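(* Let $\beta_*>0$ be the unique positive solution of $I_2(\beta)=\frac12I_1(\beta)$. If $0<\beta\le\beta_*$, then $$I_\ell(\beta)\le\frac{I_1(\beta)}{\ell}\qquad\text{for all integers }\ell\ge1,$$ and the inequality is strict for every $\ell\ge3$.
   Context: $I_\ell$ denotes the $\ell$-th modified Bessel function of the first kind, $I_\ell(\beta)=\sum_{k\ge0}\frac{1}{k!(k+\ell)!}(\beta/2)^{2k+\ell}$. *)

theory Defs
  imports Complex_Main
begin

definition besselI :: "nat \<Rightarrow> real \<Rightarrow> real" where
  "besselI l \<beta> = (\<Sum>k. (\<beta> / 2) ^ (2 * k + l) / (fact k * fact (k + l)))"

end

theory Submission
  imports Defs
begin

text \<open>Comparing the series term by term gives the recursion
  \<open>(l+1) I\<^bsub>l+1\<^esub>(\<beta>) \<le> (\<beta>/2) I\<^sub>l(\<beta>)\<close>. If \<open>\<beta> < 4\<close> and \<open>l I\<^sub>l(\<beta>) \<le> I\<^sub>1(\<beta>)\<close>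
  for some \<open>l \<ge> 2\<close>, it yields \<open>(l+1) I\<^bsub>l+1\<^esub>(\<beta>) \<le> (\<beta>/2) I\<^sub>1(\<beta>)/l < I\<^sub>1(\<beta>)\<close>,
  so everything follows by induction from the case \<open>l = 2\<close>, i.e. from
  \<open>I\<^sub>2(\<beta>) \<le> I\<^sub>1(\<beta>)/2\<close>. The recursion for \<open>l = 1\<close> gives \<open>I\<^sub>2 < I\<^sub>1/2\<close> on \<open>(0,2)\<close>,
  and a numerical estimate gives \<open>I\<^sub>2(4) > I\<^sub>1(4)/2\<close>. Hence, by continuity and
  uniqueness of the root, \<open>\<beta>\<^sub>* < 4\<close> and \<open>I\<^sub>2 \<le> I\<^sub>1/2\<close> on \<open>(0,\<beta>\<^sub>*]\<close>.\<close>

definition bessel_term :: "nat \<Rightarrow> real \<Rightarrow> nat \<Rightarrow> real" where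
  "bessel_term l b k = (b / 2) ^ (2 * k + l) / (fact k * fact (k + l))"

lemma besselI_conv_suminf: "besselI l b = suminf (bessel_term l b)"
  by (simp add: besselI_def bessel_term_def [abs_def])

lemma summable_bessel_coeffs:
  "summable (\<lambda>k. inverse (fact k * fact (k + l)) * (y :: real) ^ k)"
proof (rule summable_comparison_test' [OF summable_exp [of "\<bar>y\<bar>"]])
  fix k :: nat
  have "inverse (fact k * fact (k + l)) \<le> inverse (fact k :: real)"
    by (simp add: field_simps)
  then show "norm (inverse (fact k * fact (k + l)) * y ^ k) \<le> inverse (fact k) * \<bar>y\<bar> ^ k"
    by (simp add: abs_mult power_abs mult_right_mono)
qed

lemma bessel_term_conv_power_series:
  "bessel_term l b k = (b / 2) ^ l * (inverse (fact k * fact (k + l)) * ((b / 2)\<^sup>2) ^ k)"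
proof -
  have "(b / 2) ^ (2 * k + l) = (b / 2) ^ l * ((b / 2)\<^sup>2) ^ k"
    by (subst power_add, subst power_mult, rule mult.commute)
  then show ?thesis
    unfolding bessel_term_def by (simp only: divide_inverse mult.assoc, simp only: ac_simps)
qed

lemma summable_bessel_term: "summable (bessel_term l b)"
  unfolding bessel_term_conv_power_series by (intro summable_mult summable_bessel_coeffs)

lemma isCont_besselI: "isCont (besselI l) b"
proof -
  define series where "series y = (\<Sum>k. inverse (fact k * fact (k + l)) * (y :: real) ^ k)" for y
  have besselI_eq: "besselI l = (\<lambda>b. (b / 2) ^ l * series ((b / 2)\<^sup>2))"
    unfolding besselI_conv_suminf bessel_term_conv_power_series series_def
    by (intro ext suminf_mult summable_bessel_coeffs)
  have series_cont: "isCont (\<lambda>b. series ((b / 2)\<^sup>2)) b"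
  proof (rule isCont_o2 [where f = "\<lambda>b. (b / 2)\<^sup>2"])
    show "isCont (\<lambda>b. (b / 2)\<^sup>2) b"
      by (intro continuous_intros) simp
    show "isCont series ((b / 2)\<^sup>2)"
      unfolding series_def [abs_def]
      by (rule isCont_powser_converges_everywhere, rule summable_bessel_coeffs)
  qed
  show ?thesis
    unfolding besselI_eq by (intro continuous_intros series_cont) simp
qed

lemma bessel_term_Suc_order:
  "bessel_term (Suc l) b k = bessel_term l b k * (b / 2 / (k + l + 1))"
  by (simp add: bessel_term_def field_simps)

lemma bessel_term_Suc:
  "bessel_term l b (Suc k) = bessel_term l b k * ((b / 2)\<^sup>2 / ((k + 1) * (k + l + 1)))"
proof -
  have "(b / 2) ^ (2 * Suc k + l) = (b / 2) ^ (2 * k + l) * (b / 2)\<^sup>2"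
    by (simp flip: power_add add: algebra_simps)
  then show ?thesis
    by (simp add: bessel_term_def field_simps)
qed

lemma bessel_term_nonneg: "0 \<le> b \<Longrightarrow> 0 \<le> bessel_term l b k"
  by (simp add: bessel_term_def)

lemma besselI_pos: "0 < b \<Longrightarrow> 0 < besselI l b"
  unfolding besselI_conv_suminf by (rule suminf_pos [OF summable_bessel_term]) (simp add: bessel_term_def)

lemma besselI_Suc_le:
  assumes "0 \<le> b"
  shows "Suc l * besselI (Suc l) b \<le> b / 2 * besselI l b"
proof -
  have "Suc l * besselI (Suc l) b = (\<Sum>k. Suc l * bessel_term (Suc l) b k)"
    unfolding besselI_conv_suminf by (rule suminf_mult [symmetric, OF summable_bessel_term])
  also have "\<dots> \<le> (\<Sum>k. b / 2 * bessel_term l b k)"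
  proof (rule suminf_le)
    fix k
    have "Suc l * (b / 2 / (k + l + 1)) \<le> b / 2"
      using assms by (simp add: field_simps mult_left_mono)
    then have "bessel_term l b k * (Suc l * (b / 2 / (k + l + 1))) \<le> bessel_term l b k * (b / 2)"
      by (rule mult_left_mono) (rule bessel_term_nonneg [OF assms])
    then show "Suc l * bessel_term (Suc l) b k \<le> b / 2 * bessel_term l b k"
      by (simp add: bessel_term_Suc_order ac_simps)
  qed (intro summable_mult summable_bessel_term)+
  also have "\<dots> = b / 2 * besselI l b"
    unfolding besselI_conv_suminf by (rule suminf_mult [OF summable_bessel_term])
  finally show ?thesis .
qed

lemma besselI_2_lt_half_besselI_1:
  assumes "0 < b" "b < 2"
  shows "besselI 2 b < besselI 1 b / 2"
proof -
  have "2 * besselI 2 b \<le> b / 2 * besselI 1 b"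
    using besselI_Suc_le [of b 1] assms by (simp add: numeral_2_eq_2)
  also have "\<dots> < besselI 1 b"
    using assms besselI_pos [of b 1] by simp
  finally show ?thesis by simp
qed

lemma bessel_term_1_4_tail_le: "bessel_term 1 4 (k + 3) \<le> 8 / 9 * (1 / 5) ^ k"
proof (induction k)
  case 0
  show ?case by (simp add: bessel_term_def eval_nat_numeral)
next
  case (Suc k)
  have "(20 :: real) \<le> (real k + 4) * (real k + 5)"
    by (simp add: algebra_simps)
  then have ratio: "(4 / 2)\<^sup>2 / ((real k + 4) * (real k + 5)) \<le> (1 / 5 :: real)"
    by (simp add: divide_le_eq)
  have "bessel_term 1 4 (Suc k + 3)
      = bessel_term 1 4 (k + 3) * ((4 / 2)\<^sup>2 / ((real k + 4) * (real k + 5)))"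
    using bessel_term_Suc [of 1 4 "k + 3"] by (simp add: add_ac)
  also have "\<dots> \<le> bessel_term 1 4 (k + 3) * (1 / 5)"
    by (rule mult_left_mono [OF ratio bessel_term_nonneg]) simp
  also have "\<dots> \<le> 8 / 9 * (1 / 5) ^ Suc k"
    using Suc by simp
  finally show ?case .
qed

lemma half_besselI_1_4_lt_besselI_2_4: "besselI 1 4 / 2 < besselI 2 4"
proof -
  define h where "h k = bessel_term 1 4 k / 2 - bessel_term 2 4 k" for k
  have summable_half: "summable (\<lambda>k. bessel_term 1 4 k / 2)"
    by (intro summable_divide summable_bessel_term)
  then have summable_h: "summable h"
    unfolding h_def by (intro summable_diff summable_bessel_term)
  have "besselI 1 4 / 2 - besselI 2 4 = suminf h"
    unfolding besselI_conv_suminf h_def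
    by (simp only: suminf_diff [OF summable_half summable_bessel_term, symmetric] suminf_divide [OF summable_bessel_term])
  also have "\<dots> = (\<Sum>k. h (k + 3)) + (\<Sum>k<3. h k)"
    by (rule suminf_split_initial_segment [OF summable_h])
  also have "(\<Sum>k<3. h k) = - 5 / 3"
    by (simp add: h_def bessel_term_def eval_nat_numeral lessThan_Suc)
  also have "(\<Sum>k. h (k + 3)) \<le> (\<Sum>k. 4 / 9 * (1 / 5 :: real) ^ k)"
  proof (rule suminf_le)
    show "h (k + 3) \<le> 4 / 9 * (1 / 5) ^ k" for k
      using bessel_term_1_4_tail_le [of k] bessel_term_nonneg [of 4 2 "k + 3"]
      by (simp add: h_def)
    show "summable (\<lambda>k. h (k + 3))"
      by (rule summable_ignore_initial_segment [OF summable_h])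
    show "summable (\<lambda>k. 4 / 9 * (1 / 5 :: real) ^ k)"
      by (intro summable_mult summable_geometric) simp
  qed
  also have "(\<Sum>k. 4 / 9 * (1 / 5 :: real) ^ k) = 5 / 9"
    by (subst suminf_mult [OF summable_geometric]) (simp_all add: suminf_geometric)
  finally show ?thesis by simp
qed

lemma besselI_root_between:
  assumes "a \<le> c" "besselI 2 a < besselI 1 a / 2" "besselI 1 c / 2 < besselI 2 c"
  obtains x where "a \<le> x" "x \<le> c" "besselI 2 x = besselI 1 x / 2"
proof -
  have "isCont (\<lambda>x. besselI 1 x / 2 - besselI 2 x) x" for x
    by (intro continuous_intros isCont_besselI) simp
  then have "\<exists>x. a \<le> x \<and> x \<le> c \<and> besselI 1 x / 2 - besselI 2 x = 0"
    using assms by (intro IVT2) auto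
  then show ?thesis using that by auto
qed

context
  fixes \<beta>s :: real
  assumes root_unique: "\<And>b. b > 0 \<Longrightarrow> besselI 2 b = besselI 1 b / 2 \<Longrightarrow> b = \<beta>s"
begin

lemma bessel_root_lt_4: "\<beta>s < 4"
proof -
  have below_1: "besselI 2 1 < besselI 1 1 / 2"
    by (rule besselI_2_lt_half_besselI_1) simp_all
  obtain x where x: "1 \<le> x" "x \<le> 4" "besselI 2 x = besselI 1 x / 2"
    by (rule besselI_root_between [OF _ below_1 half_besselI_1_4_lt_besselI_2_4]) simp
  then have "x = \<beta>s"
    using root_unique by simp
  moreover have "x \<noteq> 4"
    using x(3) half_besselI_1_4_lt_besselI_2_4 by auto
  ultimately show ?thesis
    using x(2) by simp
qed

lemma besselI_2_le_half_besselI_1_below_root: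
  assumes "besselI 2 \<beta>s = besselI 1 \<beta>s / 2" "0 < b" "b \<le> \<beta>s"
  shows "besselI 2 b \<le> besselI 1 b / 2"
proof (rule ccontr)
  assume "\<not> besselI 2 b \<le> besselI 1 b / 2"
  then have above: "besselI 1 b / 2 < besselI 2 b"
    by simp
  then have "1 \<le> b"
    using besselI_2_lt_half_besselI_1 [of b] \<open>0 < b\<close> by fastforce
  moreover have "besselI 2 1 < besselI 1 1 / 2"
    by (rule besselI_2_lt_half_besselI_1) simp_all
  ultimately obtain x where x: "1 \<le> x" "x \<le> b" "besselI 2 x = besselI 1 x / 2"
    using above by (rule besselI_root_between)
  then have "x = \<beta>s"
    using root_unique by simp
  then have "b = \<beta>s"
    using x(2) \<open>b \<le> \<beta>s\<close> by simp
  with above assms(1) show False by simp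
qed

end

lemma Suc_mult_besselI_Suc_lt_besselI_1:
  assumes "0 < b" "b < 4" "2 \<le> l" "l * besselI l b \<le> besselI 1 b"
  shows "Suc l * besselI (Suc l) b < besselI 1 b"
proof -
  have "l * (Suc l * besselI (Suc l) b) \<le> l * (b / 2 * besselI l b)"
    using besselI_Suc_le [of b l] assms(1) by (intro mult_left_mono) simp_all
  also have "\<dots> = b / 2 * (l * besselI l b)"
    by simp
  also have "\<dots> \<le> b / 2 * besselI 1 b"
    using assms by (intro mult_left_mono) simp_all
  also have "\<dots> < l * besselI 1 b"
    using assms besselI_pos [of b 1] by (intro mult_strict_right_mono) simp_all
  finally show ?thesis
    using assms(3) by simp
qed

lemma mult_besselI_le_besselI_1:
  assumes "0 < b" "b < 4" "besselI 2 b \<le> besselI 1 b / 2" "2 \<le> l"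
  shows "l * besselI l b \<le> besselI 1 b"
  using \<open>2 \<le> l\<close>
proof (induction l rule: nat_induct_at_least)
  case base
  show ?case using assms(3) by simp
next
  case (Suc l)
  then have "Suc l * besselI (Suc l) b < besselI 1 b"
    using Suc_mult_besselI_Suc_lt_besselI_1 assms(1,2) by blast
  then show ?case
    by (rule less_imp_le)
qed

theorem lemma3p1:
  fixes \<beta>s \<beta> :: real
  assumes bs_pos: "\<beta>s > 0"
    and bs_sol: "besselI 2 \<beta>s = besselI 1 \<beta>s / 2"
    and bs_unique: "\<And>b. b > 0 \<Longrightarrow> besselI 2 b = besselI 1 b / 2 \<Longrightarrow> b = \<beta>s"
    and \<beta>_pos: "0 < \<beta>" and \<beta>_le: "\<beta> \<le> \<beta>s"
  shows "(\<forall>l::nat. l \<ge> 1 \<longrightarrow> besselI l \<beta> \<le> besselI 1 \<beta> / real l)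
       \<and> (\<forall>l::nat. l \<ge> 3 \<longrightarrow> besselI l \<beta> < besselI 1 \<beta> / real l)"
proof -
  have "\<beta> < 4"
    using bessel_root_lt_4 [OF bs_unique] \<beta>_le by simp
  moreover have "besselI 2 \<beta> \<le> besselI 1 \<beta> / 2"
    using besselI_2_le_half_besselI_1_below_root [OF bs_unique bs_sol \<beta>_pos \<beta>_le] .
  ultimately have le: "l * besselI l \<beta> \<le> besselI 1 \<beta>" if "2 \<le> l" for l
    using mult_besselI_le_besselI_1 \<beta>_pos that by blast
  have lt: "l * besselI l \<beta> < besselI 1 \<beta>" if "3 \<le> l" for l
    using Suc_mult_besselI_Suc_lt_besselI_1 [OF \<beta>_pos \<open>\<beta> < 4\<close> _ le, of "l - 1"] that
    by simp
  show ?thesis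
  proof (intro conjI allI impI)
    fix l :: nat
    assume "1 \<le> l"
    then consider "l = 1" | "2 \<le> l" by linarith
    then show "besselI l \<beta> \<le> besselI 1 \<beta> / l"
      by cases (use le in \<open>simp_all add: pos_le_divide_eq mult.commute\<close>)
  next
    fix l :: nat
    assume "3 \<le> l"
    then show "besselI l \<beta> < besselI 1 \<beta> / l"
      using lt by (simp add: pos_less_divide_eq mult.commute)
  qed
qed

end
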